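(* Let $k$ be an algebraically closed field of characteristic $0$, $\alpha\in k$ with $\alpha(1-\alpha^2)\neq 0$, and let $\mathcal L_1,\mathcal L_2,\mathcal L_3,\mathcal L_4,\mathcal L_{5a},\mathcal L_{5b},\mathcal L_{6a},\mathcal L_{6b}\subset\mathbb P^5$ be the curves defined in the context (the irreducible components of the line scheme of $A(\alpha)$). Then these components intersect at twenty distinct points. The pairs meeting in exactly one point are \[ \mathcal L_2\cap\mathcal L_3=\mathcal L_2\cap\mathcal L_4=\mathcal L_3\cap\mathcal L_4=\{E_2\},\quad \mathcal L_3\cap\mathcal L_{5a}=\{E_3\},\quad \mathcal L_4\cap\mathcal L_{6a}=\{E_4\},\quad \mathcal L_{5a}\cap\mathcal L_{6a}=\{E_5\}; \] the pairs meeting in two distinct points are \[ \begin{aligned} &\mathcal L_1\cap\mathcal L_3=\{(1,0,\pm i,0,0,0)\}, && \mathcal L_2\cap\mathcal L_{5b}=\{(0,0,0,0,a,\pm ib)\},\\ &\mathcal L_1\cap\mathcal L_4=\{(0,0,0,\alpha,0,1\pm d)\}, && \mathcal L_2\cap\mathcal L_{6b}=\{(b,0,0,0,\pm i,0)\},\\ &\mathcal L_1\cap\mathcal L_{5b}=\{(0,0,\pm ia,0,0,1)\}, && \mathcal L_{5a}\cap\mathcal L_{5b}=\{(0,0,b,0,\pm i,0)\},\\ &\mathcal L_1\cap\mathcal L_{6b}=\{(\pm ia,0,0,1,0,0)\}, && \mathcal L_{6a}\cap\mathcal L_{6b}=\{(0,0,0,b,\pm ia,0)\}, \end{aligned} \]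 where $i,a,b,d\in k$ satisfy $i^2=-1$, $a^2=\alpha$, $b^2=2$, $d^2=1-\alpha^2$; and all other pairwise intersections are empty.
   Context: Points of $\mathbb P^5$ are written in homogeneous coordinates $(M_{12},M_{13},M_{14},M_{23},M_{24},M_{34})$, and $E_j$ denotes the point whose $j$-th coordinate is $1$ and all others $0$. With $\mathcal V(S)$ the zero locus of $S$: $\mathcal L_1=\mathcal V(M_{13},M_{24},M_{12}M_{34}+M_{14}M_{23},M_{12}^2+M_{14}^2+\alpha M_{23}^2-2M_{23}M_{34}+\alpha M_{34}^2)$; $\mathcal L_2=\mathcal V(M_{14},M_{23},M_{12}M_{34}-M_{13}M_{24},M_{12}^2+2M_{24}^2+\alpha M_{34}^2)$; $\mathcal L_3=\mathcal V(M_{23},M_{24},M_{34},M_{12}^3-M_{13}^2M_{14}+M_{12}M_{14}^2)$; $\mathcal L_4=\mathcal V(M_{12},M_{14},M_{24},M_{13}^2M_{23}-\alpha M_{23}^2M_{34}+2M_{23}M_{34}^2-\alpha M_{34}^3)$; $\mathcal L_{5a}=\mathcal V(M_{12},M_{13},M_{23},M_{34})$; $\mathcal L_{5b}=\mathcal V(M_{12},M_{13},M_{23},M_{14}^2+2M_{24}^2+\alpha M_{34}^2)$; $\mathcal L_{6a}=\mathcal V(M_{12},M_{13},M_{14},M_{34})$; $\mathcal L_{6b}=\mathcal V(M_{13},M_{14},M_{34},M_{12}^2+\alpha M_{23}^2+2M_{24}^2)$. (These are the irreducible components of the line scheme of the algebra $A(\alpha)$ on generators $x_1,\dots,x_4$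 with relations $x_3x_1+x_1x_3=0$, $x_3x_2-x_2x_3=0$, $2x_2^2+\alpha x_3^2=x_1^2$, $x_4x_1+x_1x_4=0$, $x_2^2-x_4^2=0$, $x_4x_2+x_2x_4=x_3^2$.) *)

theory Defs
  imports "HOL-Computational_Algebra.Polynomial"
begin

definition alg_closed :: "'a::field itself \<Rightarrow> bool" where
  "alg_closed (T :: 'a itself) \<longleftrightarrow>
     (\<forall>p :: 'a poly. degree p \<ge> 1 \<longrightarrow> (\<exists>x. poly p x = 0))"

text \<open>Homogeneous coordinates (M12, M13, M14, M23, M24, M34) of a point of P^5.\<close>
datatype 'a pt6 = P6 (M12: 'a) (M13: 'a) (M14: 'a) (M23: 'a) (M24: 'a) (M34: 'a)

definition zero6 :: "'a::zero pt6" where "zero6 = P6 0 0 0 0 0 0"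

definition scale6 :: "'a::times \<Rightarrow> 'a pt6 \<Rightarrow> 'a pt6" where
  "scale6 c v = P6 (c * M12 v) (c * M13 v) (c * M14 v) (c * M23 v) (c * M24 v) (c * M34 v)"

definition peq :: "'a::field pt6 \<Rightarrow> 'a pt6 \<Rightarrow> bool" where
  "peq u v \<longleftrightarrow> (\<exists>c. c \<noteq> 0 \<and> u = scale6 c v)"

definition pclass :: "'a::field pt6 \<Rightarrow> 'a pt6 set" where
  "pclass v = {w. w \<noteq> zero6 \<and> peq w v}"

definition E :: "nat \<Rightarrow> 'a::zero_neq_one pt6" where
  "E j = P6 (if j = 1 then 1 else 0) (if j = 2 then 1 else 0) (if j = 3 then 1 else 0)
            (if j = 4 then 1 else 0) (if j = 5 then 1 else 0) (if j = 6 then 1 else 0)"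

text \<open>The components, as sets of nonzero representatives (all equations homogeneous).\<close>
definition L1 :: "'a::field \<Rightarrow> 'a pt6 set" where
  "L1 \<alpha> = {v. v \<noteq> zero6 \<and> M13 v = 0 \<and> M24 v = 0 \<and> M12 v * M34 v + M14 v * M23 v = 0 \<and>
     M12 v ^ 2 + M14 v ^ 2 + \<alpha> * M23 v ^ 2 - 2 * M23 v * M34 v + \<alpha> * M34 v ^ 2 = 0}"

definition L2 :: "'a::field \<Rightarrow> 'a pt6 set" where
  "L2 \<alpha> = {v. v \<noteq> zero6 \<and> M14 v = 0 \<and> M23 v = 0 \<and> M12 v * M34 v - M13 v * M24 v = 0 \<and>
     M12 v ^ 2 + 2 * M24 v ^ 2 + \<alpha> * M34 v ^ 2 = 0}"

definition L3 :: "'a::field \<Rightarrow> 'a pt6 set" where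
  "L3 \<alpha> = {v. v \<noteq> zero6 \<and> M23 v = 0 \<and> M24 v = 0 \<and> M34 v = 0 \<and>
     M12 v ^ 3 - M13 v ^ 2 * M14 v + M12 v * M14 v ^ 2 = 0}"

definition L4 :: "'a::field \<Rightarrow> 'a pt6 set" where
  "L4 \<alpha> = {v. v \<noteq> zero6 \<and> M12 v = 0 \<and> M14 v = 0 \<and> M24 v = 0 \<and>
     M13 v ^ 2 * M23 v - \<alpha> * M23 v ^ 2 * M34 v + 2 * M23 v * M34 v ^ 2 - \<alpha> * M34 v ^ 3 = 0}"

definition L5a :: "'a::field \<Rightarrow> 'a pt6 set" where
  "L5a \<alpha> = {v. v \<noteq> zero6 \<and> M12 v = 0 \<and> M13 v = 0 \<and> M23 v = 0 \<and> M34 v = 0}"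

definition L5b :: "'a::field \<Rightarrow> 'a pt6 set" where
  "L5b \<alpha> = {v. v \<noteq> zero6 \<and> M12 v = 0 \<and> M13 v = 0 \<and> M23 v = 0 \<and>
     M14 v ^ 2 + 2 * M24 v ^ 2 + \<alpha> * M34 v ^ 2 = 0}"

definition L6a :: "'a::field \<Rightarrow> 'a pt6 set" where
  "L6a \<alpha> = {v. v \<noteq> zero6 \<and> M12 v = 0 \<and> M13 v = 0 \<and> M14 v = 0 \<and> M34 v = 0}"

definition L6b :: "'a::field \<Rightarrow> 'a pt6 set" where
  "L6b \<alpha> = {v. v \<noteq> zero6 \<and> M13 v = 0 \<and> M14 v = 0 \<and> M34 v = 0 \<and>
     M12 v ^ 2 + \<alpha> * M23 v ^ 2 + 2 * M24 v ^ 2 = 0}"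

definition comps :: "'a::field \<Rightarrow> 'a pt6 set list" where
  "comps \<alpha> = [L1 \<alpha>, L2 \<alpha>, L3 \<alpha>, L4 \<alpha>, L5a \<alpha>, L5b \<alpha>, L6a \<alpha>, L6b \<alpha>]"

definition intersection_pts :: "'a::field \<Rightarrow> 'a pt6 set" where
  "intersection_pts \<alpha> =
     (\<Union>j<8. \<Union>k<8. if j < k then comps \<alpha> ! j \<inter> comps \<alpha> ! k else {})"

definition proj_is1 :: "'a::field pt6 set \<Rightarrow> 'a pt6 \<Rightarrow> bool" where
  "proj_is1 S p \<longleftrightarrow> p \<noteq> zero6 \<and> S = pclass p"

definition proj_is2 :: "'a::field pt6 set \<Rightarrow> 'a pt6 \<Rightarrow> 'a pt6 \<Rightarrow> bool" where
  "proj_is2 S p q \<longleftrightarrow> p \<noteq> zero6 \<and> q \<noteq> zero6 \<and> \<not> peq p q \<and> S = pclass p \<union> pclass q"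

end

theory Submission
  imports Defs
begin

text \<open>Every component lies in a coordinate subspace, so on the intersection of two components only
  the coordinates common to both subspaces survive; there are at most two of them, and the
  remaining equations either kill one of them (a coordinate point) or reduce to a binary quadratic
  form \<open>(s x)\<^sup>2 = (r y)\<^sup>2\<close>, whose zeros are the two points \<open>(r : \<plusminus>s)\<close>. The twenty points found this way
  are pairwise non-proportional because \<open>\<alpha> \<noteq> 0\<close>, \<open>\<alpha>\<^sup>2 \<noteq> 1\<close> and the characteristic is \<open>0\<close>.\<close>

lemma P6_eq_zero6_iff [simp]:
  "P6 x12 x13 x14 x23 x24 x34 = zero6 \<longleftrightarrow>
     x12 = 0 \<and> x13 = 0 \<and> x14 = 0 \<and> x23 = 0 \<and> x24 = 0 \<and> x34 = 0"
  by (simp add: zero6_def)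

lemma zero6_iff: "v = zero6 \<longleftrightarrow>
    M12 v = 0 \<and> M13 v = 0 \<and> M14 v = 0 \<and> M23 v = 0 \<and> M24 v = 0 \<and> M34 v = 0"
  by (cases v) simp

lemma scale6_P6 [simp]:
  "scale6 c (P6 x12 x13 x14 x23 x24 x34) =
     P6 (c * x12) (c * x13) (c * x14) (c * x23) (c * x24) (c * x34)"
  by (simp add: scale6_def)

lemma scale6_scale6: "scale6 c (scale6 e v) = scale6 (c * e) (v :: 'a::semigroup_mult pt6)"
  by (cases v) (simp add: mult.assoc)

lemma scale6_one: "scale6 1 v = (v :: 'a::monoid_mult pt6)"
  by (cases v) simp

lemma scale6_eq_zero6_iff: "scale6 c v = zero6 \<longleftrightarrow> c = 0 \<or> v = (zero6 :: 'a::field pt6)"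
  by (cases v) auto

lemma peq_P6:
  "peq (P6 x12 x13 x14 x23 x24 x34) (P6 y12 y13 y14 y23 y24 y34) \<longleftrightarrow>
     (\<exists>c. c \<noteq> 0 \<and> x12 = c * y12 \<and> x13 = c * y13 \<and> x14 = c * y14 \<and>
          x23 = c * y23 \<and> x24 = c * y24 \<and> x34 = c * y34)"
  by (simp add: peq_def)

lemma peq_refl: "peq v v"
  unfolding peq_def by (metis scale6_one one_neq_zero)

lemma peq_sym: "peq u v \<Longrightarrow> peq v u"
  unfolding peq_def
  by (metis scale6_scale6 scale6_one field_class.field_inverse inverse_nonzero_iff_nonzero mult.commute)

lemma peq_trans: "peq u v \<Longrightarrow> peq v w \<Longrightarrow> peq u w"
  unfolding peq_def by (metis scale6_scale6 no_zero_divisors)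

lemma pclass_eq_iff:
  assumes "p \<noteq> zero6"
  shows "pclass p = pclass q \<longleftrightarrow> peq p q"
proof
  assume "pclass p = pclass q"
  moreover have "p \<in> pclass p" using assms by (simp add: pclass_def peq_refl)
  ultimately show "peq p q" by (simp add: pclass_def)
next
  assume "peq p q"
  then show "pclass p = pclass q"
    unfolding pclass_def by (blast intro: peq_trans peq_sym)
qed

lemma pclass_image_pclass:
  assumes "p \<noteq> zero6"
  shows "pclass ` pclass p = {pclass p}"
proof -
  have "pclass w = pclass p" if "w \<in> pclass p" for w
  proof -
    have "w \<noteq> zero6" "peq w p" using that by (simp_all add: pclass_def)
    then show ?thesis by (simp add: pclass_eq_iff)
  qed
  moreover have "p \<in> pclass p" using assms by (simp add: pclass_def peq_refl)
  ultimately show ?thesis by blast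
qed

lemma image_pclass_proj_is1: "proj_is1 S p \<Longrightarrow> pclass ` S = {pclass p}"
  by (simp add: proj_is1_def pclass_image_pclass)

lemma image_pclass_proj_is2: "proj_is2 S p q \<Longrightarrow> pclass ` S = {pclass p, pclass q}"
  by (simp add: proj_is2_def image_Un pclass_image_pclass insert_commute)

definition scaling_closed :: "'a::field pt6 set \<Rightarrow> bool" where
  "scaling_closed S \<longleftrightarrow> (\<forall>v\<in>S. \<forall>c. c \<noteq> 0 \<longrightarrow> scale6 c v \<in> S)"

lemma scaling_closed_Int: "scaling_closed A \<Longrightarrow> scaling_closed B \<Longrightarrow> scaling_closed (A \<inter> B)"
  by (simp add: scaling_closed_def)

lemma proj_is1I:
  assumes "scaling_closed S" "zero6 \<notin> S" "p \<in> S" "\<And>v. v \<in> S \<Longrightarrow> peq v p"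
  shows "proj_is1 S p"
  using assms unfolding proj_is1_def pclass_def scaling_closed_def peq_def by blast

lemma proj_is2I:
  assumes "scaling_closed S" "zero6 \<notin> S" "p \<in> S" "q \<in> S" "\<not> peq p q"
    and "\<And>v. v \<in> S \<Longrightarrow> peq v p \<or> peq v q"
  shows "proj_is2 S p q"
  using assms unfolding proj_is2_def pclass_def scaling_closed_def peq_def by blast

lemma scaling_closed_components:
  "scaling_closed (L1 \<alpha>)" "scaling_closed (L2 \<alpha>)" "scaling_closed (L3 \<alpha>)" "scaling_closed (L4 \<alpha>)"
  "scaling_closed (L5a \<alpha>)" "scaling_closed (L5b \<alpha>)" "scaling_closed (L6a \<alpha>)" "scaling_closed (L6b \<alpha>)"
  unfolding scaling_closed_def L1_def L2_def L3_def L4_def L5a_def L5b_def L6a_def L6b_def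
  by (auto simp: scale6_eq_zero6_iff scale6_def zero6_iff) (algebra+)

lemma zero6_notin_components:
  "zero6 \<notin> L1 \<alpha>" "zero6 \<notin> L2 \<alpha>" "zero6 \<notin> L3 \<alpha>" "zero6 \<notin> L4 \<alpha>"
  "zero6 \<notin> L5a \<alpha>" "zero6 \<notin> L5b \<alpha>" "zero6 \<notin> L6a \<alpha>" "zero6 \<notin> L6b \<alpha>"
  by (simp_all add: L1_def L2_def L3_def L4_def L5a_def L5b_def L6a_def L6b_def)

lemma P6_in_components:
  "P6 x12 x13 x14 x23 x24 x34 \<in> L1 \<alpha> \<longleftrightarrow> \<not> (x12 = 0 \<and> x14 = 0 \<and> x23 = 0 \<and> x34 = 0) \<and>
     x13 = 0 \<and> x24 = 0 \<and> x12 * x34 + x14 * x23 = 0 \<and>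
     x12 ^ 2 + x14 ^ 2 + \<alpha> * x23 ^ 2 - 2 * x23 * x34 + \<alpha> * x34 ^ 2 = 0"
  "P6 x12 x13 x14 x23 x24 x34 \<in> L2 \<alpha> \<longleftrightarrow> \<not> (x12 = 0 \<and> x13 = 0 \<and> x24 = 0 \<and> x34 = 0) \<and>
     x14 = 0 \<and> x23 = 0 \<and> x12 * x34 - x13 * x24 = 0 \<and> x12 ^ 2 + 2 * x24 ^ 2 + \<alpha> * x34 ^ 2 = 0"
  "P6 x12 x13 x14 x23 x24 x34 \<in> L3 \<alpha> \<longleftrightarrow> \<not> (x12 = 0 \<and> x13 = 0 \<and> x14 = 0) \<and>
     x23 = 0 \<and> x24 = 0 \<and> x34 = 0 \<and> x12 ^ 3 - x13 ^ 2 * x14 + x12 * x14 ^ 2 = 0"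
  "P6 x12 x13 x14 x23 x24 x34 \<in> L4 \<alpha> \<longleftrightarrow> \<not> (x13 = 0 \<and> x23 = 0 \<and> x34 = 0) \<and>
     x12 = 0 \<and> x14 = 0 \<and> x24 = 0 \<and>
     x13 ^ 2 * x23 - \<alpha> * x23 ^ 2 * x34 + 2 * x23 * x34 ^ 2 - \<alpha> * x34 ^ 3 = 0"
  "P6 x12 x13 x14 x23 x24 x34 \<in> L5a \<alpha> \<longleftrightarrow> \<not> (x14 = 0 \<and> x24 = 0) \<and>
     x12 = 0 \<and> x13 = 0 \<and> x23 = 0 \<and> x34 = 0"
  "P6 x12 x13 x14 x23 x24 x34 \<in> L5b \<alpha> \<longleftrightarrow> \<not> (x14 = 0 \<and> x24 = 0 \<and> x34 = 0) \<and>
     x12 = 0 \<and> x13 = 0 \<and> x23 = 0 \<and> x14 ^ 2 + 2 * x24 ^ 2 + \<alpha> * x34 ^ 2 = 0"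
  "P6 x12 x13 x14 x23 x24 x34 \<in> L6a \<alpha> \<longleftrightarrow> \<not> (x23 = 0 \<and> x24 = 0) \<and>
     x12 = 0 \<and> x13 = 0 \<and> x14 = 0 \<and> x34 = 0"
  "P6 x12 x13 x14 x23 x24 x34 \<in> L6b \<alpha> \<longleftrightarrow> \<not> (x12 = 0 \<and> x23 = 0 \<and> x24 = 0) \<and>
     x13 = 0 \<and> x14 = 0 \<and> x34 = 0 \<and> x12 ^ 2 + \<alpha> * x23 ^ 2 + 2 * x24 ^ 2 = 0"
  by (auto simp: L1_def L2_def L3_def L4_def L5a_def L5b_def L6a_def L6b_def)

lemma square_eq_square_proportional:
  fixes x y r s :: "'a::field"
  assumes "(s * x)^2 = (r * y)^2" and "r \<noteq> 0" and "x \<noteq> 0 \<or> y \<noteq> 0"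
  shows "\<exists>c. c \<noteq> 0 \<and> x = c * r \<and> (y = c * s \<or> y = - (c * s))"
proof (intro exI conjI)
  have "r * y = s * x \<or> r * y = - (s * x)"
    using assms(1) by (auto simp: power2_eq_iff)
  then show "y = x / r * s \<or> y = - (x / r * s)"
    using assms(2) by (auto simp: field_simps)
  then show "x / r \<noteq> 0" using assms(2,3) by auto
qed (use assms(2) in simp)

lemmas component_simps = P6_in_components scaling_closed_Int scaling_closed_components
  zero6_notin_components peq_P6 E_def

lemma L1_Int_L3_two_points:
  fixes i :: "'a::field_char_0"
  assumes "i^2 = -1"
  shows "proj_is2 (L1 \<alpha> \<inter> L3 \<alpha>) (P6 1 0 i 0 0 0) (P6 1 0 (- i) 0 0 0)"
proof (rule proj_is2I)
  fix v assume "v \<in> L1 \<alpha> \<inter> L3 \<alpha>"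
  then obtain x12 x14 where v: "v = P6 x12 0 x14 0 0 0"
    and eq: "x12^2 + x14^2 = 0" and nz: "x12 \<noteq> 0 \<or> x14 \<noteq> 0"
    by (cases v) (auto simp: component_simps)
  have "(i * x12)^2 = (1 * x14)^2" using eq assms by algebra
  from square_eq_square_proportional[OF this one_neq_zero nz]
  obtain c where "c \<noteq> 0" "x12 = c * 1" "x14 = c * i \<or> x14 = - (c * i)" by blast
  with v have "v = scale6 c (P6 1 0 i 0 0 0) \<or> v = scale6 c (P6 1 0 (- i) 0 0 0)"
    by auto
  with \<open>c \<noteq> 0\<close> show "peq v (P6 1 0 i 0 0 0) \<or> peq v (P6 1 0 (- i) 0 0 0)"
    unfolding peq_def by blast
qed (use assms in \<open>auto simp: component_simps power2_eq_square power3_eq_cube\<close>)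

lemma L1_Int_L4_two_points:
  fixes \<alpha> d :: "'a::field_char_0"
  assumes "\<alpha> \<noteq> 0" and "d \<noteq> 0" and "d^2 = 1 - \<alpha>^2"
  shows "proj_is2 (L1 \<alpha> \<inter> L4 \<alpha>) (P6 0 0 0 \<alpha> 0 (1 + d)) (P6 0 0 0 \<alpha> 0 (1 - d))"
proof (rule proj_is2I)
  fix v assume "v \<in> L1 \<alpha> \<inter> L4 \<alpha>"
  then obtain x23 x34 where v: "v = P6 0 0 0 x23 0 x34"
    and eq: "\<alpha> * x23^2 - 2 * x23 * x34 + \<alpha> * x34^2 = 0" and nz: "x23 \<noteq> 0 \<or> x34 \<noteq> 0"
    by (cases v) (auto simp: component_simps)
  \<comment> \<open>multiplying the quadric by \<open>\<alpha>\<close> completes a square\<close>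
  have sq: "(d * x23)^2 = (1 * (\<alpha> * x34 - x23))^2" using eq assms(3) by algebra
  have "x23 \<noteq> 0 \<or> \<alpha> * x34 - x23 \<noteq> 0" using nz assms(1) by auto
  from square_eq_square_proportional[OF sq one_neq_zero this]
  obtain c where "c \<noteq> 0" "x23 = c * 1"
    "\<alpha> * x34 - x23 = c * d \<or> \<alpha> * x34 - x23 = - (c * d)" by blast
  with v assms(1) have "v = scale6 (c / \<alpha>) (P6 0 0 0 \<alpha> 0 (1 + d)) \<or>
      v = scale6 (c / \<alpha>) (P6 0 0 0 \<alpha> 0 (1 - d))"
    by (auto simp: field_simps)
  with \<open>c \<noteq> 0\<close> assms(1) show "peq v (P6 0 0 0 \<alpha> 0 (1 + d)) \<or> peq v (P6 0 0 0 \<alpha> 0 (1 - d))"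
    unfolding peq_def by (metis divide_eq_0_iff)
qed (use assms in \<open>simp_all add: component_simps\<close>, algebra+)

lemma L1_Int_L5b_two_points:
  fixes \<alpha> i a :: "'a::field_char_0"
  assumes "\<alpha> \<noteq> 0" and "i^2 = -1" and "a^2 = \<alpha>"
  shows "proj_is2 (L1 \<alpha> \<inter> L5b \<alpha>) (P6 0 0 (i * a) 0 0 1) (P6 0 0 (- (i * a)) 0 0 1)"
proof (rule proj_is2I)
  fix v assume "v \<in> L1 \<alpha> \<inter> L5b \<alpha>"
  then obtain x14 x34 where v: "v = P6 0 0 x14 0 0 x34"
    and eq: "x14^2 + \<alpha> * x34^2 = 0" and nz: "x34 \<noteq> 0 \<or> x14 \<noteq> 0"
    by (cases v) (auto simp: component_simps)
  have "((i * a) * x34)^2 = (1 * x14)^2" using eq assms by algebra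
  from square_eq_square_proportional[OF this one_neq_zero nz]
  obtain c where "c \<noteq> 0" "x34 = c * 1" "x14 = c * (i * a) \<or> x14 = - (c * (i * a))" by blast
  with v have "v = scale6 c (P6 0 0 (i * a) 0 0 1) \<or> v = scale6 c (P6 0 0 (- (i * a)) 0 0 1)"
    by auto
  with \<open>c \<noteq> 0\<close> show "peq v (P6 0 0 (i * a) 0 0 1) \<or> peq v (P6 0 0 (- (i * a)) 0 0 1)"
    unfolding peq_def by blast
qed (use assms in \<open>auto simp: component_simps power_mult_distrib\<close>)

lemma L1_Int_L6b_two_points:
  fixes \<alpha> i a :: "'a::field_char_0"
  assumes "\<alpha> \<noteq> 0" and "i^2 = -1" and "a^2 = \<alpha>"
  shows "proj_is2 (L1 \<alpha> \<inter> L6b \<alpha>) (P6 (i * a) 0 0 1 0 0) (P6 (- (i * a)) 0 0 1 0 0)"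
proof (rule proj_is2I)
  fix v assume "v \<in> L1 \<alpha> \<inter> L6b \<alpha>"
  then obtain x12 x23 where v: "v = P6 x12 0 0 x23 0 0"
    and eq: "x12^2 + \<alpha> * x23^2 = 0" and nz: "x23 \<noteq> 0 \<or> x12 \<noteq> 0"
    by (cases v) (auto simp: component_simps)
  have "((i * a) * x23)^2 = (1 * x12)^2" using eq assms by algebra
  from square_eq_square_proportional[OF this one_neq_zero nz]
  obtain c where "c \<noteq> 0" "x23 = c * 1" "x12 = c * (i * a) \<or> x12 = - (c * (i * a))" by blast
  with v have "v = scale6 c (P6 (i * a) 0 0 1 0 0) \<or> v = scale6 c (P6 (- (i * a)) 0 0 1 0 0)"
    by auto
  with \<open>c \<noteq> 0\<close> show "peq v (P6 (i * a) 0 0 1 0 0) \<or> peq v (P6 (- (i * a)) 0 0 1 0 0)"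
    unfolding peq_def by blast
qed (use assms in \<open>auto simp: component_simps power_mult_distrib\<close>)

lemma L2_Int_L5b_two_points:
  fixes \<alpha> i a b :: "'a::field_char_0"
  assumes "\<alpha> \<noteq> 0" and "i^2 = -1" and "a^2 = \<alpha>" and "b^2 = 2"
  shows "proj_is2 (L2 \<alpha> \<inter> L5b \<alpha>) (P6 0 0 0 0 a (i * b)) (P6 0 0 0 0 a (- (i * b)))"
proof (rule proj_is2I)
  have "a \<noteq> 0" using assms(1,3) by auto
  fix v assume "v \<in> L2 \<alpha> \<inter> L5b \<alpha>"
  then obtain x24 x34 where v: "v = P6 0 0 0 0 x24 x34"
    and eq: "2 * x24^2 + \<alpha> * x34^2 = 0" and nz: "x24 \<noteq> 0 \<or> x34 \<noteq> 0"
    by (cases v) (auto simp: component_simps)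
  have "((i * b) * x24)^2 = (a * x34)^2" using eq assms by algebra
  from square_eq_square_proportional[OF this \<open>a \<noteq> 0\<close> nz]
  obtain c where "c \<noteq> 0" "x24 = c * a" "x34 = c * (i * b) \<or> x34 = - (c * (i * b))" by blast
  with v have "v = scale6 c (P6 0 0 0 0 a (i * b)) \<or> v = scale6 c (P6 0 0 0 0 a (- (i * b)))"
    by auto
  with \<open>c \<noteq> 0\<close> show "peq v (P6 0 0 0 0 a (i * b)) \<or> peq v (P6 0 0 0 0 a (- (i * b)))"
    unfolding peq_def by blast
qed (use assms in \<open>auto simp: component_simps power_mult_distrib\<close>)

lemma L2_Int_L6b_two_points:
  fixes \<alpha> i b :: "'a::field_char_0"
  assumes "i^2 = -1" and "b^2 = 2"
  shows "proj_is2 (L2 \<alpha> \<inter> L6b \<alpha>) (P6 b 0 0 0 i 0) (P6 b 0 0 0 (- i) 0)"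
proof (rule proj_is2I)
  have "b \<noteq> 0" using assms(2) by auto
  fix v assume "v \<in> L2 \<alpha> \<inter> L6b \<alpha>"
  then obtain x12 x24 where v: "v = P6 x12 0 0 0 x24 0"
    and eq: "x12^2 + 2 * x24^2 = 0" and nz: "x12 \<noteq> 0 \<or> x24 \<noteq> 0"
    by (cases v) (auto simp: component_simps)
  have "(i * x12)^2 = (b * x24)^2" using eq assms by algebra
  from square_eq_square_proportional[OF this \<open>b \<noteq> 0\<close> nz]
  obtain c where "c \<noteq> 0" "x12 = c * b" "x24 = c * i \<or> x24 = - (c * i)" by blast
  with v have "v = scale6 c (P6 b 0 0 0 i 0) \<or> v = scale6 c (P6 b 0 0 0 (- i) 0)"
    by auto
  with \<open>c \<noteq> 0\<close> show "peq v (P6 b 0 0 0 i 0) \<or> peq v (P6 b 0 0 0 (- i) 0)"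
    unfolding peq_def by blast
qed (use assms in \<open>auto simp: component_simps power_mult_distrib\<close>)

lemma L5a_Int_L5b_two_points:
  fixes \<alpha> i b :: "'a::field_char_0"
  assumes "i^2 = -1" and "b^2 = 2"
  shows "proj_is2 (L5a \<alpha> \<inter> L5b \<alpha>) (P6 0 0 b 0 i 0) (P6 0 0 b 0 (- i) 0)"
proof (rule proj_is2I)
  have "b \<noteq> 0" using assms(2) by auto
  fix v assume "v \<in> L5a \<alpha> \<inter> L5b \<alpha>"
  then obtain x14 x24 where v: "v = P6 0 0 x14 0 x24 0"
    and eq: "x14^2 + 2 * x24^2 = 0" and nz: "x14 \<noteq> 0 \<or> x24 \<noteq> 0"
    by (cases v) (auto simp: component_simps)
  have "(i * x14)^2 = (b * x24)^2" using eq assms by algebra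
  from square_eq_square_proportional[OF this \<open>b \<noteq> 0\<close> nz]
  obtain c where "c \<noteq> 0" "x14 = c * b" "x24 = c * i \<or> x24 = - (c * i)" by blast
  with v have "v = scale6 c (P6 0 0 b 0 i 0) \<or> v = scale6 c (P6 0 0 b 0 (- i) 0)"
    by auto
  with \<open>c \<noteq> 0\<close> show "peq v (P6 0 0 b 0 i 0) \<or> peq v (P6 0 0 b 0 (- i) 0)"
    unfolding peq_def by blast
qed (use assms in \<open>auto simp: component_simps power_mult_distrib\<close>)

lemma L6a_Int_L6b_two_points:
  fixes \<alpha> i a b :: "'a::field_char_0"
  assumes "\<alpha> \<noteq> 0" and "i^2 = -1" and "a^2 = \<alpha>" and "b^2 = 2"
  shows "proj_is2 (L6a \<alpha> \<inter> L6b \<alpha>) (P6 0 0 0 b (i * a) 0) (P6 0 0 0 b (- (i * a)) 0)"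
proof (rule proj_is2I)
  have "b \<noteq> 0" using assms(4) by auto
  fix v assume "v \<in> L6a \<alpha> \<inter> L6b \<alpha>"
  then obtain x23 x24 where v: "v = P6 0 0 0 x23 x24 0"
    and eq: "\<alpha> * x23^2 + 2 * x24^2 = 0" and nz: "x23 \<noteq> 0 \<or> x24 \<noteq> 0"
    by (cases v) (auto simp: component_simps)
  have "((i * a) * x23)^2 = (b * x24)^2" using eq assms by algebra
  from square_eq_square_proportional[OF this \<open>b \<noteq> 0\<close> nz]
  obtain c where "c \<noteq> 0" "x23 = c * b" "x24 = c * (i * a) \<or> x24 = - (c * (i * a))" by blast
  with v have "v = scale6 c (P6 0 0 0 b (i * a) 0) \<or> v = scale6 c (P6 0 0 0 b (- (i * a)) 0)"
    by auto
  with \<open>c \<noteq> 0\<close> show "peq v (P6 0 0 0 b (i * a) 0) \<or> peq v (P6 0 0 0 b (- (i * a)) 0)"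
    unfolding peq_def by blast
qed (use assms in \<open>auto simp: component_simps power_mult_distrib\<close>)

lemma L2_Int_L3_single_point: "proj_is1 (L2 \<alpha> \<inter> L3 \<alpha>) (E 2)"
proof (rule proj_is1I)
  fix v assume "v \<in> L2 \<alpha> \<inter> L3 \<alpha>"
  then show "peq v (E 2)" by (cases v) (auto simp: component_simps)
qed (auto simp: component_simps)

lemma L2_Int_L4_single_point:
  fixes \<alpha> :: "'a::field"
  assumes "\<alpha> \<noteq> 0"
  shows "proj_is1 (L2 \<alpha> \<inter> L4 \<alpha>) (E 2)"
proof (rule proj_is1I)
  fix v assume "v \<in> L2 \<alpha> \<inter> L4 \<alpha>"
  then show "peq v (E 2)" using assms by (cases v) (auto simp: component_simps)
qed (auto simp: component_simps)

lemma L3_Int_L4_single_point: "proj_is1 (L3 \<alpha> \<inter> L4 \<alpha>) (E 2)"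
proof (rule proj_is1I)
  fix v assume "v \<in> L3 \<alpha> \<inter> L4 \<alpha>"
  then show "peq v (E 2)" by (cases v) (auto simp: component_simps)
qed (auto simp: component_simps)

lemma L3_Int_L5a_single_point: "proj_is1 (L3 \<alpha> \<inter> L5a \<alpha>) (E 3)"
proof (rule proj_is1I)
  fix v assume "v \<in> L3 \<alpha> \<inter> L5a \<alpha>"
  then show "peq v (E 3)" by (cases v) (auto simp: component_simps)
qed (auto simp: component_simps)

lemma L4_Int_L6a_single_point: "proj_is1 (L4 \<alpha> \<inter> L6a \<alpha>) (E 4)"
proof (rule proj_is1I)
  fix v assume "v \<in> L4 \<alpha> \<inter> L6a \<alpha>"
  then show "peq v (E 4)" by (cases v) (auto simp: component_simps)
qed (auto simp: component_simps)

lemma L5a_Int_L6a_single_point: "proj_is1 (L5a \<alpha> \<inter> L6a \<alpha>) (E 5)"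
proof (rule proj_is1I)
  fix v assume "v \<in> L5a \<alpha> \<inter> L6a \<alpha>"
  then show "peq v (E 5)" by (cases v) (auto simp: component_simps)
qed (auto simp: component_simps)

lemma components_disjoint:
  fixes \<alpha> :: "'a::field_char_0"
  assumes "\<alpha> \<noteq> 0"
  shows "L1 \<alpha> \<inter> L2 \<alpha> = {}" "L1 \<alpha> \<inter> L5a \<alpha> = {}" "L1 \<alpha> \<inter> L6a \<alpha> = {}"
    "L2 \<alpha> \<inter> L5a \<alpha> = {}" "L2 \<alpha> \<inter> L6a \<alpha> = {}"
    "L3 \<alpha> \<inter> L5b \<alpha> = {}" "L3 \<alpha> \<inter> L6a \<alpha> = {}" "L3 \<alpha> \<inter> L6b \<alpha> = {}"
    "L4 \<alpha> \<inter> L5a \<alpha> = {}" "L4 \<alpha> \<inter> L5b \<alpha> = {}" "L4 \<alpha> \<inter> L6b \<alpha> = {}"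
    "L5a \<alpha> \<inter> L6b \<alpha> = {}" "L5b \<alpha> \<inter> L6a \<alpha> = {}" "L5b \<alpha> \<inter> L6b \<alpha> = {}"
  using assms by (auto simp: L1_def L2_def L3_def L4_def L5a_def L5b_def L6a_def L6b_def zero6_iff)

lemma intersection_pts_eq:
  "intersection_pts \<alpha> =
     (L1 \<alpha> \<inter> L2 \<alpha>) \<union> (L1 \<alpha> \<inter> L3 \<alpha>) \<union> (L1 \<alpha> \<inter> L4 \<alpha>) \<union> (L1 \<alpha> \<inter> L5a \<alpha>) \<union>
     (L1 \<alpha> \<inter> L5b \<alpha>) \<union> (L1 \<alpha> \<inter> L6a \<alpha>) \<union> (L1 \<alpha> \<inter> L6b \<alpha>) \<union>
     (L2 \<alpha> \<inter> L3 \<alpha>) \<union> (L2 \<alpha> \<inter> L4 \<alpha>) \<union> (L2 \<alpha> \<inter> L5a \<alpha>) \<union> (L2 \<alpha> \<inter> L5b \<alpha>) \<union>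
     (L2 \<alpha> \<inter> L6a \<alpha>) \<union> (L2 \<alpha> \<inter> L6b \<alpha>) \<union>
     (L3 \<alpha> \<inter> L4 \<alpha>) \<union> (L3 \<alpha> \<inter> L5a \<alpha>) \<union> (L3 \<alpha> \<inter> L5b \<alpha>) \<union> (L3 \<alpha> \<inter> L6a \<alpha>) \<union>
     (L3 \<alpha> \<inter> L6b \<alpha>) \<union>
     (L4 \<alpha> \<inter> L5a \<alpha>) \<union> (L4 \<alpha> \<inter> L5b \<alpha>) \<union> (L4 \<alpha> \<inter> L6a \<alpha>) \<union> (L4 \<alpha> \<inter> L6b \<alpha>) \<union>
     (L5a \<alpha> \<inter> L5b \<alpha>) \<union> (L5a \<alpha> \<inter> L6a \<alpha>) \<union> (L5a \<alpha> \<inter> L6b \<alpha>) \<union>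
     (L5b \<alpha> \<inter> L6a \<alpha>) \<union> (L5b \<alpha> \<inter> L6b \<alpha>) \<union> (L6a \<alpha> \<inter> L6b \<alpha>)"
proof -
  have "{..<8::nat} = {0, 1, 2, 3, 4, 5, 6, 7}" by auto
  then show ?thesis unfolding intersection_pts_def comps_def by (simp add: Int_Un_distrib Un_ac)
qed

lemma card_intersection_classes:
  fixes \<alpha> i a b d :: "'a::field_char_0"
  assumes "\<alpha> * (1 - \<alpha> ^ 2) \<noteq> 0"
    and "i ^ 2 = -1" and "a ^ 2 = \<alpha>" and "b ^ 2 = 2" and "d ^ 2 = 1 - \<alpha> ^ 2"
  shows "card (pclass ` intersection_pts \<alpha>) = 20"
proof -
  have "\<alpha> \<noteq> 0" "d \<noteq> 0" using assms(1,5) by auto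
  have "1 + d \<noteq> 0" "1 - d \<noteq> 0" "i \<noteq> 0" "a \<noteq> 0" "b \<noteq> 0"
    using assms by (auto simp: power2_eq_square) algebra+
  have "pclass ` intersection_pts \<alpha> =
    {pclass (E 2), pclass (E 3), pclass (E 4), pclass (E 5),
     pclass (P6 1 0 i 0 0 0), pclass (P6 1 0 (- i) 0 0 0),
     pclass (P6 0 0 0 \<alpha> 0 (1 + d)), pclass (P6 0 0 0 \<alpha> 0 (1 - d)),
     pclass (P6 0 0 (i * a) 0 0 1), pclass (P6 0 0 (- (i * a)) 0 0 1),
     pclass (P6 (i * a) 0 0 1 0 0), pclass (P6 (- (i * a)) 0 0 1 0 0),
     pclass (P6 0 0 0 0 a (i * b)), pclass (P6 0 0 0 0 a (- (i * b))),
     pclass (P6 b 0 0 0 i 0), pclass (P6 b 0 0 0 (- i) 0),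
     pclass (P6 0 0 b 0 i 0), pclass (P6 0 0 b 0 (- i) 0),
     pclass (P6 0 0 0 b (i * a) 0), pclass (P6 0 0 0 b (- (i * a)) 0)}"
    unfolding intersection_pts_eq image_Un
    using \<open>\<alpha> \<noteq> 0\<close> \<open>d \<noteq> 0\<close> assms(2-5)
    by (simp add: components_disjoint insert_commute
        image_pclass_proj_is1 [OF L2_Int_L3_single_point] image_pclass_proj_is1 [OF L2_Int_L4_single_point]
        image_pclass_proj_is1 [OF L3_Int_L4_single_point] image_pclass_proj_is1 [OF L3_Int_L5a_single_point]
        image_pclass_proj_is1 [OF L4_Int_L6a_single_point] image_pclass_proj_is1 [OF L5a_Int_L6a_single_point]
        image_pclass_proj_is2 [OF L1_Int_L3_two_points] image_pclass_proj_is2 [OF L1_Int_L4_two_points]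
        image_pclass_proj_is2 [OF L1_Int_L5b_two_points] image_pclass_proj_is2 [OF L1_Int_L6b_two_points]
        image_pclass_proj_is2 [OF L2_Int_L5b_two_points] image_pclass_proj_is2 [OF L2_Int_L6b_two_points]
        image_pclass_proj_is2 [OF L5a_Int_L5b_two_points] image_pclass_proj_is2 [OF L6a_Int_L6b_two_points])
  then show ?thesis
    using \<open>\<alpha> \<noteq> 0\<close> \<open>d \<noteq> 0\<close> \<open>1 + d \<noteq> 0\<close> \<open>1 - d \<noteq> 0\<close> \<open>i \<noteq> 0\<close> \<open>a \<noteq> 0\<close> \<open>b \<noteq> 0\<close>
    by (simp add: pclass_eq_iff peq_P6 E_def)
qed

theorem corollary3p3:
  fixes \<alpha> i a b d :: "'k::field_char_0"
  assumes "alg_closed TYPE('k)"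
    and "\<alpha> * (1 - \<alpha> ^ 2) \<noteq> 0"
    and "i ^ 2 = -1" and "a ^ 2 = \<alpha>" and "b ^ 2 = 2" and "d ^ 2 = 1 - \<alpha> ^ 2"
  shows
    "card (pclass ` intersection_pts \<alpha>) = 20
     \<and> proj_is1 (L2 \<alpha> \<inter> L3 \<alpha>) (E 2)
     \<and> proj_is1 (L2 \<alpha> \<inter> L4 \<alpha>) (E 2)
     \<and> proj_is1 (L3 \<alpha> \<inter> L4 \<alpha>) (E 2)
     \<and> proj_is1 (L3 \<alpha> \<inter> L5a \<alpha>) (E 3)
     \<and> proj_is1 (L4 \<alpha> \<inter> L6a \<alpha>) (E 4)
     \<and> proj_is1 (L5a \<alpha> \<inter> L6a \<alpha>) (E 5)
     \<and> proj_is2 (L1 \<alpha> \<inter> L3 \<alpha>) (P6 1 0 i 0 0 0) (P6 1 0 (- i) 0 0 0)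
     \<and> proj_is2 (L1 \<alpha> \<inter> L4 \<alpha>) (P6 0 0 0 \<alpha> 0 (1 + d)) (P6 0 0 0 \<alpha> 0 (1 - d))
     \<and> proj_is2 (L1 \<alpha> \<inter> L5b \<alpha>) (P6 0 0 (i * a) 0 0 1) (P6 0 0 (- (i * a)) 0 0 1)
     \<and> proj_is2 (L1 \<alpha> \<inter> L6b \<alpha>) (P6 (i * a) 0 0 1 0 0) (P6 (- (i * a)) 0 0 1 0 0)
     \<and> proj_is2 (L2 \<alpha> \<inter> L5b \<alpha>) (P6 0 0 0 0 a (i * b)) (P6 0 0 0 0 a (- (i * b)))
     \<and> proj_is2 (L2 \<alpha> \<inter> L6b \<alpha>) (P6 b 0 0 0 i 0) (P6 b 0 0 0 (- i) 0)
     \<and> proj_is2 (L5a \<alpha> \<inter> L5b \<alpha>) (P6 0 0 b 0 i 0) (P6 0 0 b 0 (- i) 0)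
     \<and> proj_is2 (L6a \<alpha> \<inter> L6b \<alpha>) (P6 0 0 0 b (i * a) 0) (P6 0 0 0 b (- (i * a)) 0)
     \<and> L1 \<alpha> \<inter> L2 \<alpha> = {} \<and> L1 \<alpha> \<inter> L5a \<alpha> = {} \<and> L1 \<alpha> \<inter> L6a \<alpha> = {}
     \<and> L2 \<alpha> \<inter> L5a \<alpha> = {} \<and> L2 \<alpha> \<inter> L6a \<alpha> = {}
     \<and> L3 \<alpha> \<inter> L5b \<alpha> = {} \<and> L3 \<alpha> \<inter> L6a \<alpha> = {} \<and> L3 \<alpha> \<inter> L6b \<alpha> = {}
     \<and> L4 \<alpha> \<inter> L5a \<alpha> = {} \<and> L4 \<alpha> \<inter> L5b \<alpha> = {} \<and> L4 \<alpha> \<inter> L6b \<alpha> = {}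
     \<and> L5a \<alpha> \<inter> L6b \<alpha> = {} \<and> L5b \<alpha> \<inter> L6a \<alpha> = {} \<and> L5b \<alpha> \<inter> L6b \<alpha> = {}"
proof -
  have "\<alpha> \<noteq> 0" and "d \<noteq> 0" using assms(2,6) by auto
  then show ?thesis
    using card_intersection_classes [OF assms(2-6)] components_disjoint [OF \<open>\<alpha> \<noteq> 0\<close>]
      L2_Int_L3_single_point [of \<alpha>] L2_Int_L4_single_point [OF \<open>\<alpha> \<noteq> 0\<close>] L3_Int_L4_single_point [of \<alpha>]
      L3_Int_L5a_single_point [of \<alpha>] L4_Int_L6a_single_point [of \<alpha>] L5a_Int_L6a_single_point [of \<alpha>]
      L1_Int_L3_two_points [OF assms(3), of \<alpha>] L1_Int_L4_two_points [OF \<open>\<alpha> \<noteq> 0\<close> \<open>d \<noteq> 0\<close> assms(6)]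
      L1_Int_L5b_two_points [OF \<open>\<alpha> \<noteq> 0\<close> assms(3,4)] L1_Int_L6b_two_points [OF \<open>\<alpha> \<noteq> 0\<close> assms(3,4)]
      L2_Int_L5b_two_points [OF \<open>\<alpha> \<noteq> 0\<close> assms(3-5)] L2_Int_L6b_two_points [OF assms(3,5), of \<alpha>]
      L5a_Int_L5b_two_points [OF assms(3,5), of \<alpha>] L6a_Int_L6b_two_points [OF \<open>\<alpha> \<noteq> 0\<close> assms(3-5)]
    by simp
qed

end
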